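(* Let $(B,G)$ be an admissible pair with $B\in M_{Q_0}(\mathbb Z)$, let $(A,\mathbf x)$ be a $G$-invariant seed in $\mathcal A(B)$ and let $\Omega$ be a $G$-orbit in $Q_0$. Let $(A^{(n)},\mathbf x^{(n)})=\mu^G_\Omega(A,\mathbf x)$, with $A^{(n)}=(a^{(n)}_{ij})$ and $\mathbf x^{(n)}=(x^{(n)}_i)_{i\in Q_0}$. Then $G$ is an automorphism group of $A^{(n)}$, and for all $i\in Q_0$ and $g\in G$: $$a^{(n)}_{i,gi}=0\quad\text{and}\quad x^{(n)}_{gi}=g\,x^{(n)}_i.$$
   Context: $Q_0$ finite; matrices are skew-symmetrizable ($DB$ skew-symmetric for a positive integer diagonal $D$). Mutation of matrices: $\mu_k(M)=(m'_{ij})$ with $m'_{ij}=-m_{ij}$ if $k\in\{i,j\}$, else $m_{ij}+\tfrac12(|m_{ik}|m_{kj}+m_{ik}|m_{kj}|)$; of seeds: $\mu_k(M,\mathbf y)=(\mu_k(M),\mathbf y')$ with $y'_i=y_i$ ($i\ne k$) and $y_ky'_k=\prod_{m_{ik}>0}y_i^{m_{ik}}+\prod_{m_{ik}<0}y_i^{-m_{ik}}$. $\mathcal A(B)=\mathcal A(B,\mathbf u)$ is the cluster algebra with initial seed $(B,\mathbf u)$, $\mathbf u=(u_i)_{i\in Q_0}$; its seeds are those obtained by finite sequences of mutations. A permutation $g$ of $Q_0$ is an automorphism of $S=(s_{ij})$ if $s_{gi,gj}=s_{ij}$ for all $i,j$; a group $G$ of automorphisms is admissible ($(S,G)$ an admissible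 pair) if for distinct $i,j$ in the same $G$-orbit there is no path of length $1$ or $2$ from $i$ to $j$ in the quiver of $S$ ($s_{ij}\le0$ and no $k$ with $s_{ik}>0$, $s_{kj}>0$). $G$ acts on $\mathbb Z[\mathbf u^{\pm1}]$ by $gu_i=u_{gi}$. A seed $(S,\mathbf x)$ is $G$-invariant if $gx_i=x_{gi}$ for all $g,i$ and $(S,G)$ is an admissible pair. The orbit mutation is $\mu^G_\Omega=\prod_{j\in\Omega}\mu_j$ (mutation at all elements of $\Omega$, order irrelevant). *)

theory Defs
  imports "HOL-Library.Poly_Mapping" "HOL-Computational_Algebra.Fraction_Field"
begin

type_synonym 'q imat = "'q \<Rightarrow> 'q \<Rightarrow> int"

text \<open>Z[u_i : i in Q0] as finitely supported functions from monomials to int,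
  and the field of rational functions Q(u) as its fraction field.\<close>
type_synonym 'q zpoly = "('q \<Rightarrow>\<^sub>0 nat) \<Rightarrow>\<^sub>0 int"
type_synonym 'q ratfun = "'q zpoly fract"

definition skew_symmetrizable :: "'q imat \<Rightarrow> bool" where
  "skew_symmetrizable B \<longleftrightarrow>
     (\<exists>d :: 'q \<Rightarrow> int. (\<forall>i. d i > 0) \<and> (\<forall>i j. d i * B i j = - (d j * B j i)))"

text \<open>Matrix mutation; the term |m_ik| m_kj + m_ik |m_kj| is always even.\<close>
definition mut_mat :: "'q \<Rightarrow> 'q imat \<Rightarrow> 'q imat" where
  "mut_mat k M = (\<lambda>i j. if i = k \<or> j = k then - M i j
                        else M i j + (\<bar>M i k\<bar> * M k j + M i k * \<bar>M k j\<bar>) div 2)"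

definition mut_seed :: "'q::finite \<Rightarrow> 'q imat \<times> ('q \<Rightarrow> 'a::field) \<Rightarrow> 'q imat \<times> ('q \<Rightarrow> 'a)" where
  "mut_seed k s = (case s of (M, y) \<Rightarrow>
     (mut_mat k M,
      y(k := ((\<Prod>i\<in>{i. M i k > 0}. y i ^ nat (M i k)) + (\<Prod>i\<in>{i. M i k < 0}. y i ^ nat (- M i k)))
             / y k)))"

definition uvar :: "'q \<Rightarrow> 'q::linorder ratfun" where
  "uvar i = Fract (Poly_Mapping.single (Poly_Mapping.single i 1) 1) 1"

inductive_set cluster_seeds :: "'q::{finite,linorder} imat \<Rightarrow> ('q imat \<times> ('q \<Rightarrow> 'q ratfun)) set"
  for B where
  init: "(B, uvar) \<in> cluster_seeds B"
| mut: "s \<in> cluster_seeds B \<Longrightarrow> mut_seed k s \<in> cluster_seeds B"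

text \<open>Action of a permutation g of Q0 on Z[u] by u_i \<mapsto> u_{g i}:
  the monomial m goes to m \<circ> inv g, so the coefficient of m' in g p is the coefficient of m' \<circ> g in p.\<close>
definition poly_act :: "('q \<Rightarrow> 'q) \<Rightarrow> 'q zpoly \<Rightarrow> 'q zpoly" where
  "poly_act g p = Poly_Mapping.map_key (\<lambda>m. Poly_Mapping.map_key g m) p"

text \<open>Extension to the fraction field (independent of the chosen representative).\<close>
definition act :: "('q \<Rightarrow> 'q) \<Rightarrow> 'q::linorder ratfun \<Rightarrow> 'q ratfun" where
  "act g q = (case (SOME r. snd r \<noteq> 0 \<and> q = Fract (fst r) (snd r)) of
                (a, b) \<Rightarrow> Fract (poly_act g a) (poly_act g b))"

definition is_aut :: "'q imat \<Rightarrow> ('q \<Rightarrow> 'q) \<Rightarrow> bool" where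
  "is_aut S g \<longleftrightarrow> bij g \<and> (\<forall>i j. S (g i) (g j) = S i j)"

definition aut_group :: "'q imat \<Rightarrow> ('q \<Rightarrow> 'q) set \<Rightarrow> bool" where
  "aut_group S G \<longleftrightarrow> (\<forall>g\<in>G. is_aut S g) \<and> id \<in> G \<and>
     (\<forall>g\<in>G. \<forall>h\<in>G. g \<circ> h \<in> G) \<and> (\<forall>g\<in>G. inv g \<in> G)"

definition admissible :: "'q imat \<Rightarrow> ('q \<Rightarrow> 'q) set \<Rightarrow> bool" where
  "admissible S G \<longleftrightarrow> aut_group S G \<and>
     (\<forall>i j. (\<exists>g\<in>G. j = g i) \<and> i \<noteq> j \<longrightarrow>
        S i j \<le> 0 \<and> \<not> (\<exists>k. S i k > 0 \<and> S k j > 0))"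

definition G_invariant_seed :: "('q \<Rightarrow> 'q) set \<Rightarrow> 'q imat \<times> ('q \<Rightarrow> 'q::linorder ratfun) \<Rightarrow> bool" where
  "G_invariant_seed G s \<longleftrightarrow> (case s of (S, x) \<Rightarrow>
     admissible S G \<and> (\<forall>g\<in>G. \<forall>i. act g (x i) = x (g i)))"

definition G_orbit :: "('q \<Rightarrow> 'q) set \<Rightarrow> 'q set \<Rightarrow> bool" where
  "G_orbit G \<Omega> \<longleftrightarrow> (\<exists>i. \<Omega> = (\<lambda>g. g i) ` G)"

end

theory Submission
  imports Defs
begin

text \<open>Two vertices of the orbit \<Omega> are never joined by an arrow: admissibility forbids
  arrows \<open>i \<rightarrow> g i\<close> for \<open>g \<in> G\<close>, and as the exchange matrices of \<open>\<A>(B)\<close> stay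
  skew-symmetrizable, hence sign-skew-symmetric, this also excludes arrows \<open>g i \<rightarrow> i\<close>.
  Mutations at pairwise unconnected vertices do not interact, so mutating along \<open>ks\<close> amounts
  to a simultaneous mutation at the set \<Omega>, given by a closed formula that depends on \<Omega> only
  as a set. Each \<open>g \<in> G\<close> permutes \<Omega>, fixes \<open>A\<close> and intertwines the action on the cluster
  variables, so this formula is \<open>G\<close>-equivariant. The new entry at \<open>(i, g i)\<close> vanishes because
  a non-zero correction term in it would come from a path of length 2 between \<open>i\<close> and
  \<open>g i\<close>, which admissibility and sign-skew-symmetry exclude in both directions.\<close>

section \<open>Permutations of the variables acting on rational functions\<close>

lemma bij_map_key:
  fixes g :: "'a \<Rightarrow> 'a"
  assumes "bij g"
  shows "bij (Poly_Mapping.map_key g :: ('a \<Rightarrow>\<^sub>0 'b::zero) \<Rightarrow> _)"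
proof (rule o_bij)
  have inj: "inj g" "inj (inv g)"
    using assms bij_is_inj bij_imp_bij_inv by auto
  have g_inv: "g \<circ> inv g = id"
    using assms bij_is_surj surj_iff by blast
  show "Poly_Mapping.map_key (inv g) \<circ> Poly_Mapping.map_key g = (id :: ('a \<Rightarrow>\<^sub>0 'b) \<Rightarrow> _)"
    by (simp only: fun_eq_iff o_apply map_key_compose[OF inj(2,1)] g_inv) (simp add: id_def map_key_id)
  show "Poly_Mapping.map_key g \<circ> Poly_Mapping.map_key (inv g) = (id :: ('a \<Rightarrow>\<^sub>0 'b) \<Rightarrow> _)"
    by (simp only: fun_eq_iff o_apply map_key_compose[OF inj] inv_o_cancel[OF inj(1)])
      (simp add: id_def map_key_id)
qed

lemma lookup_poly_act:
  "bij g \<Longrightarrow> Poly_Mapping.lookup (poly_act g p) m = Poly_Mapping.lookup p (Poly_Mapping.map_key g m)"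
  unfolding poly_act_def by (simp add: map_key.rep_eq bij_is_inj bij_map_key)

lemma poly_act_add: "bij g \<Longrightarrow> poly_act g (p + q) = poly_act g p + poly_act g q"
  by (rule poly_mapping_eqI) (simp add: lookup_poly_act lookup_add)

lemma poly_act_one:
  fixes g :: "'q \<Rightarrow> 'q"
  assumes g: "bij g"
  shows "poly_act g 1 = 1"
proof (rule poly_mapping_eqI)
  fix m :: "'q \<Rightarrow>\<^sub>0 nat"
  have "Poly_Mapping.map_key g m = 0 \<longleftrightarrow> m = 0"
    using bij_is_inj[OF bij_map_key[OF g]] map_key_zero[OF bij_is_inj[OF g]] by (metis injD)
  then show "Poly_Mapping.lookup (poly_act g 1) m = Poly_Mapping.lookup 1 m"
    by (simp add: lookup_poly_act g lookup_one)
qed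

lemma poly_act_eq_0_iff:
  fixes g :: "'q \<Rightarrow> 'q"
  assumes g: "bij g"
  shows "poly_act g p = 0 \<longleftrightarrow> p = 0"
proof -
  have "Poly_Mapping.keys (poly_act g p) = Poly_Mapping.map_key g -` Poly_Mapping.keys p"
    unfolding poly_act_def by (rule keys_map_key[OF bij_is_inj[OF bij_map_key[OF g]]])
  then show ?thesis
    using surj_vimage_empty[OF bij_is_surj[OF bij_map_key[OF g]]] by (metis keys_eq_empty)
qed

lemma poly_act_mult:
  fixes g :: "'q \<Rightarrow> 'q"
  assumes g: "bij g"
  shows "poly_act g (p * q) = poly_act g p * poly_act g q"
proof (rule poly_mapping_eqI)
  fix m :: "'q \<Rightarrow>\<^sub>0 nat"
  let ?s = "Poly_Mapping.map_key g :: ('q \<Rightarrow>\<^sub>0 nat) \<Rightarrow> _"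
  have s: "bij ?s" by (rule bij_map_key[OF g])
  have split_iff: "?s m = ?s l + ?s r \<longleftrightarrow> m = l + r" for l r
    using map_key_plus[OF bij_is_inj[OF g], of l r] bij_is_inj[OF s] by (metis injD)
  have reindex_inner: "(\<Sum>r. Poly_Mapping.lookup q r when ?s m = ?s l + r)
      = (\<Sum>r. Poly_Mapping.lookup q (?s r) when ?s m = ?s l + ?s r)" for l
    by (rule Sum_any.reindex_cong[OF s]) (simp add: o_def)
  have "Poly_Mapping.lookup (poly_act g (p * q)) m
      = (\<Sum>l. Poly_Mapping.lookup p l * (\<Sum>r. Poly_Mapping.lookup q r when ?s m = l + r))"
    unfolding lookup_poly_act[OF g] lookup_mult ..
  also have "\<dots> = (\<Sum>l. Poly_Mapping.lookup p (?s l) *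
                     (\<Sum>r. Poly_Mapping.lookup q r when ?s m = ?s l + r))"
    by (rule Sum_any.reindex_cong[OF s]) (simp add: o_def)
  also have "\<dots> = (\<Sum>l. Poly_Mapping.lookup p (?s l) *
                     (\<Sum>r. Poly_Mapping.lookup q (?s r) when ?s m = ?s l + ?s r))"
    by (simp only: reindex_inner)
  also have "\<dots> = Poly_Mapping.lookup (poly_act g p * poly_act g q) m"
    unfolding lookup_poly_act[OF g] lookup_mult split_iff ..
  finally show "Poly_Mapping.lookup (poly_act g (p * q)) m
      = Poly_Mapping.lookup (poly_act g p * poly_act g q) m" .
qed

lemma act_Fract:
  fixes g :: "'q::linorder \<Rightarrow> 'q"
  assumes g: "bij g"
  shows "act g (Fract a b) = Fract (poly_act g a) (poly_act g b)"
proof -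
  have nonzero: "act g (Fract a b) = Fract (poly_act g a) (poly_act g b)" if b: "b \<noteq> 0" for a b
  proof -
    let ?P = "\<lambda>r. snd r \<noteq> 0 \<and> Fract a b = Fract (fst r) (snd r)"
    obtain a' b' where ab': "(SOME r. ?P r) = (a', b')" by fastforce
    have "?P (a, b)" using b by simp
    then have "?P (SOME r. ?P r)" by (rule someI)
    then have b': "b' \<noteq> 0" and "Fract a b = Fract a' b'" by (auto simp: ab')
    then have "a * b' = a' * b" using eq_fract(1)[OF b] by blast
    then have "poly_act g a' * poly_act g b = poly_act g a * poly_act g b'"
      by (metis poly_act_mult[OF g])
    moreover have "poly_act g b \<noteq> 0" "poly_act g b' \<noteq> 0"
      using b b' poly_act_eq_0_iff[OF g] by auto
    ultimately have "Fract (poly_act g a') (poly_act g b') = Fract (poly_act g a) (poly_act g b)"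
      by (simp add: eq_fract(1))
    then show ?thesis unfolding act_def ab' by simp
  qed
  show ?thesis
  proof (cases "b = 0")
    case True
    have "act g (Fract 0 1) = Fract (poly_act g 0) (poly_act g 1)"
      by (rule nonzero) simp
    then show ?thesis
      using True poly_act_eq_0_iff[OF g, of 0] by (simp add: fract_collapse)
  qed (rule nonzero)
qed

lemma act_one: "bij g \<Longrightarrow> act g 1 = 1"
  by (simp add: One_fract_def act_Fract poly_act_one)

lemma act_add:
  fixes g :: "'q::linorder \<Rightarrow> 'q"
  assumes g: "bij g"
  shows "act g (p + q) = act g p + act g q"
proof -
  obtain a b c d where "p = Fract a b" "b \<noteq> 0" "q = Fract c d" "d \<noteq> 0"
    by (metis Fract_cases)
  moreover have "poly_act g b \<noteq> 0" "poly_act g d \<noteq> 0"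
    using calculation poly_act_eq_0_iff[OF g] by auto
  ultimately show ?thesis by (simp add: act_Fract g poly_act_add poly_act_mult)
qed

lemma act_mult:
  fixes g :: "'q::linorder \<Rightarrow> 'q"
  assumes g: "bij g"
  shows "act g (p * q) = act g p * act g q"
proof -
  obtain a b c d where "p = Fract a b" "q = Fract c d"
    by (metis Fract_cases)
  then show ?thesis by (simp add: act_Fract g poly_act_mult)
qed

lemma act_divide:
  fixes g :: "'q::linorder \<Rightarrow> 'q"
  assumes g: "bij g"
  shows "act g (p / q) = act g p / act g q"
proof -
  obtain a b c d where "p = Fract a b" "q = Fract c d"
    by (metis Fract_cases)
  then show ?thesis by (simp add: act_Fract g poly_act_mult)
qed

lemma act_power: "bij g \<Longrightarrow> act g (p ^ n) = act g p ^ n"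
  by (induction n) (simp_all add: act_one act_mult)

lemma act_prod: "bij g \<Longrightarrow> act g (\<Prod>i\<in>S. f i) = (\<Prod>i\<in>S. act g (f i))"
  by (induction S rule: infinite_finite_induct) (simp_all add: act_one act_mult)

section \<open>Skew-symmetrizable exchange matrices\<close>

definition mut_term :: "int \<Rightarrow> int \<Rightarrow> int" where
  "mut_term a b = (\<bar>a\<bar> * b + a * \<bar>b\<bar>) div 2"

lemma mut_mat_apply:
  "mut_mat k M i j = (if i = k \<or> j = k then - M i j else M i j + mut_term (M i k) (M k j))"
  by (simp add: mut_mat_def mut_term_def)

lemma two_mut_term: "2 * mut_term a b = \<bar>a\<bar> * b + a * \<bar>b\<bar>"
  by (cases "a \<ge> 0"; cases "b \<ge> 0") (auto simp: mut_term_def)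

lemma mut_term_eq_0: "a \<le> 0 \<or> b \<le> 0 \<Longrightarrow> 0 \<le> a \<or> 0 \<le> b \<Longrightarrow> mut_term a b = 0"
  by (cases "a \<ge> 0"; cases "b \<ge> 0") (auto simp: mut_term_def)

lemma mut_term_0 [simp]: "mut_term 0 b = 0" "mut_term a 0 = 0"
  by (simp_all add: mut_term_def)

definition skew_symmetrizer :: "('q \<Rightarrow> int) \<Rightarrow> 'q imat \<Rightarrow> bool" where
  "skew_symmetrizer d M \<longleftrightarrow> (\<forall>i. d i > 0) \<and> (\<forall>i j. d i * M i j = - (d j * M j i))"

lemma skew_symmetrizable_iff: "skew_symmetrizable M \<longleftrightarrow> (\<exists>d. skew_symmetrizer d M)"
  by (simp add: skew_symmetrizable_def skew_symmetrizer_def)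

lemma skew_symmetrizer_mut_term:
  assumes "skew_symmetrizer d M"
  shows "d i * mut_term (M i k) (M k j) = - (d j * mut_term (M j k) (M k i))"
proof -
  have d: "d i > 0" "d j > 0" "d k > 0"
    and ik: "d i * M i k = - (d k * M k i)" and kj: "d k * M k j = - (d j * M j k)"
    using assms unfolding skew_symmetrizer_def by blast+
  have abs_ik: "d i * \<bar>M i k\<bar> = d k * \<bar>M k i\<bar>"
    using arg_cong[OF ik, of abs] d by (simp add: abs_mult)
  have abs_kj: "d k * \<bar>M k j\<bar> = d j * \<bar>M j k\<bar>"
    using arg_cong[OF kj, of abs] d by (simp add: abs_mult)
  have "d i * (2 * mut_term (M i k) (M k j)) = - (d j * (2 * mut_term (M j k) (M k i)))"
    unfolding two_mut_term using ik kj abs_ik abs_kj by algebra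
  then show ?thesis by (simp add: mult.left_commute[of _ 2])
qed

lemma skew_symmetrizer_mut_mat:
  assumes "skew_symmetrizer d M"
  shows "skew_symmetrizer d (mut_mat k M)"
  unfolding skew_symmetrizer_def
proof (intro conjI allI)
  fix i j
  have "d i * M i j = - (d j * M j i)"
    using assms unfolding skew_symmetrizer_def by blast
  then show "d i * mut_mat k M i j = - (d j * mut_mat k M j i)"
    using skew_symmetrizer_mut_term[OF assms, of i k j]
    by (simp add: mut_mat_apply distrib_left)
qed (use assms in \<open>unfold skew_symmetrizer_def, blast\<close>)

lemma skew_symmetrizer_cluster_seed:
  assumes "s \<in> cluster_seeds B" "skew_symmetrizer d B"
  shows "skew_symmetrizer d (fst s)"
  using assms
proof (induction rule: cluster_seeds.induct)
  case (mut s k)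
  then show ?case
    by (auto simp: mut_seed_def skew_symmetrizer_mut_mat split: prod.split)
qed simp

definition sign_skew_symmetric :: "'q imat \<Rightarrow> bool" where
  "sign_skew_symmetric M \<longleftrightarrow> (\<forall>i j. M i j > 0 \<longleftrightarrow> M j i < 0)"

lemma skew_symmetrizer_sign_skew_symmetric:
  assumes "skew_symmetrizer d M"
  shows "sign_skew_symmetric M"
  unfolding sign_skew_symmetric_def
proof (intro allI)
  fix i j
  have eq: "d i * M i j = - (d j * M j i)" and d: "d i > 0" "d j > 0"
    using assms unfolding skew_symmetrizer_def by blast+
  have "M i j > 0 \<longleftrightarrow> d i * M i j > 0"
    using d by (simp add: zero_less_mult_iff)
  also have "\<dots> \<longleftrightarrow> d j * M j i < 0"
    using eq by linarith
  also have "\<dots> \<longleftrightarrow> M j i < 0"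
    using d by (simp add: mult_less_0_iff)
  finally show "M i j > 0 \<longleftrightarrow> M j i < 0" .
qed

lemma sign_skew_symmetric_diag: "sign_skew_symmetric M \<Longrightarrow> M i i = 0"
  unfolding sign_skew_symmetric_def by (metis less_asym not_less_iff_gr_or_eq)

section \<open>Orbits of admissible groups\<close>

lemma admissible_orbit_no_short_paths:
  assumes adm: "admissible A G" and g: "g \<in> G" "g i \<noteq> i"
  shows "A i (g i) \<le> 0" "A (g i) i \<le> 0"
    and "\<not> (A i k > 0 \<and> A k (g i) > 0)" "\<not> (A (g i) k > 0 \<and> A k i > 0)"
proof -
  have no_paths: "A a b \<le> 0 \<and> \<not> (\<exists>k. A a k > 0 \<and> A k b > 0)"
    if "\<exists>h\<in>G. b = h a" "a \<noteq> b" for a b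
    using adm that unfolding admissible_def by blast
  have "inv g \<in> G" "bij g"
    using adm g unfolding admissible_def aut_group_def is_aut_def by blast+
  then have "\<exists>h\<in>G. i = h (g i)"
    by (metis bij_is_inj inv_f_f)
  then have gi_to_i: "A (g i) i \<le> 0 \<and> \<not> (\<exists>k. A (g i) k > 0 \<and> A k i > 0)"
    by (rule no_paths) (use g(2) in auto)
  have i_to_gi: "A i (g i) \<le> 0 \<and> \<not> (\<exists>k. A i k > 0 \<and> A k (g i) > 0)"
    by (rule no_paths) (use g in auto)
  show "A i (g i) \<le> 0" "A (g i) i \<le> 0"
    and "\<not> (A i k > 0 \<and> A k (g i) > 0)" "\<not> (A (g i) k > 0 \<and> A k i > 0)"
    using i_to_gi gi_to_i by blast+
qed

lemma admissible_orbit_entry_eq_0: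
  assumes "admissible A G" "sign_skew_symmetric A" "g \<in> G"
  shows "A i (g i) = 0"
proof (cases "g i = i")
  case True
  then show ?thesis using sign_skew_symmetric_diag[OF assms(2)] by simp
next
  case False
  have "A (g i) i > 0 \<longleftrightarrow> A i (g i) < 0"
    using assms(2) unfolding sign_skew_symmetric_def by blast
  then show ?thesis
    using admissible_orbit_no_short_paths(1,2)[OF assms(1,3) False] by linarith
qed

lemma admissible_orbit_mut_term_eq_0:
  assumes "admissible A G" "sign_skew_symmetric A" "g \<in> G"
  shows "mut_term (A i k) (A k (g i)) = 0"
proof (rule mut_term_eq_0)
  have sign: "A i k > 0 \<longleftrightarrow> A k i < 0" "A (g i) k > 0 \<longleftrightarrow> A k (g i) < 0" for i k
    using assms(2) unfolding sign_skew_symmetric_def by blast+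
  show "A i k \<le> 0 \<or> A k (g i) \<le> 0" "0 \<le> A i k \<or> 0 \<le> A k (g i)"
  proof (atomize (full), cases "g i = i")
    case True
    then show "(A i k \<le> 0 \<or> A k (g i) \<le> 0) \<and> (0 \<le> A i k \<or> 0 \<le> A k (g i))"
      using sign(1)[of i k] sign(1)[of k i] by auto
  next
    case False
    then show "(A i k \<le> 0 \<or> A k (g i) \<le> 0) \<and> (0 \<le> A i k \<or> 0 \<le> A k (g i))"
      using admissible_orbit_no_short_paths(3,4)[OF assms(1,3) False, of k]
        sign(1)[of "g i" k] sign(1)[of k i] by auto
  qed
qed

lemma G_orbit_image:
  assumes "aut_group M G" "G_orbit G \<Omega>" "g \<in> G"
  shows "g ` \<Omega> = \<Omega>"
proof -
  obtain i where \<Omega>: "\<Omega> = (\<lambda>h. h i) ` G"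
    using assms(2) unfolding G_orbit_def by blast
  have G: "\<And>h h'. h \<in> G \<Longrightarrow> h' \<in> G \<Longrightarrow> h \<circ> h' \<in> G" "inv g \<in> G" "bij g"
    using assms(1,3) unfolding aut_group_def is_aut_def by blast+
  show ?thesis
  proof
    show "g ` \<Omega> \<subseteq> \<Omega>"
    proof
      fix y assume "y \<in> g ` \<Omega>"
      then obtain h where "h \<in> G" "y = (g \<circ> h) i"
        unfolding \<Omega> by auto
      then show "y \<in> \<Omega>"
        unfolding \<Omega> using G(1) assms(3) by blast
    qed
    show "\<Omega> \<subseteq> g ` \<Omega>"
    proof
      fix y assume "y \<in> \<Omega>"
      then obtain h where "h \<in> G" "y = g ((inv g \<circ> h) i)"
        unfolding \<Omega> using G(3) by (auto simp: bij_is_surj surj_f_inv_f)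
      then show "y \<in> g ` \<Omega>"
        unfolding \<Omega> using G(1)[OF G(2)] by blast
    qed
  qed
qed

lemma admissible_orbit_entries_eq_0:
  assumes "admissible A G" "sign_skew_symmetric A" "G_orbit G \<Omega>" "k \<in> \<Omega>" "k' \<in> \<Omega>"
  shows "A k k' = 0"
proof -
  obtain i where \<Omega>: "\<Omega> = (\<lambda>h. h i) ` G"
    using assms(3) unfolding G_orbit_def by blast
  obtain h h' where h: "h \<in> G" "h' \<in> G" "k = h i" "k' = h' i"
    using assms(4,5) unfolding \<Omega> by blast
  have "h' \<circ> inv h \<in> G" "bij h"
    using assms(1) h(1,2) unfolding admissible_def aut_group_def is_aut_def by blast+
  moreover have "k' = (h' \<circ> inv h) k"
    using \<open>bij h\<close> h(3,4) by (simp add: bij_is_inj)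
  ultimately show ?thesis
    using admissible_orbit_entry_eq_0[OF assms(1,2)] by metis
qed

section \<open>Simultaneous mutation at unconnected vertices\<close>

definition mut_var :: "'q imat \<Rightarrow> ('q \<Rightarrow> 'a::field) \<Rightarrow> 'q \<Rightarrow> 'a" where
  "mut_var M y k =
     ((\<Prod>i\<in>{i. M i k > 0}. y i ^ nat (M i k)) + (\<Prod>i\<in>{i. M i k < 0}. y i ^ nat (- M i k))) / y k"

lemma mut_seed_eq: "mut_seed k (M, y) = (mut_mat k M, y(k := mut_var M y k))"
  by (simp add: mut_seed_def mut_var_def)

definition simul_mut_mat :: "'q set \<Rightarrow> 'q imat \<Rightarrow> 'q imat" where
  "simul_mut_mat S M i j =
     (if i \<in> S \<or> j \<in> S then - M i j else M i j + (\<Sum>k\<in>S. mut_term (M i k) (M k j)))"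

definition simul_mut_vars :: "'q set \<Rightarrow> 'q imat \<Rightarrow> ('q \<Rightarrow> 'a::field) \<Rightarrow> 'q \<Rightarrow> 'a" where
  "simul_mut_vars S M y i = (if i \<in> S then mut_var M y i else y i)"

lemma simul_mut_mat_unconnected:
  assumes "k \<notin> S" "\<forall>a\<in>insert k S. \<forall>b\<in>insert k S. M a b = 0"
  shows "simul_mut_mat S M l k = M l k" and "l \<notin> S \<Longrightarrow> simul_mut_mat S M k l = M k l"
  using assms by (auto simp: simul_mut_mat_def intro!: sum.neutral)

lemma mut_mat_simul_mut_mat:
  assumes "finite S" "k \<notin> S" and unconnected: "\<forall>a\<in>insert k S. \<forall>b\<in>insert k S. M a b = 0"
  shows "mut_mat k (simul_mut_mat S M) = simul_mut_mat (insert k S) M"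
proof (intro ext)
  fix i j
  note col = simul_mut_mat_unconnected(1)[OF assms(2,3)]
  note row = simul_mut_mat_unconnected(2)[OF assms(2,3)]
  show "mut_mat k (simul_mut_mat S M) i j = simul_mut_mat (insert k S) M i j"
  proof (cases "i = k \<or> j = k")
    case True
    then show ?thesis
      using col row unconnected by (cases "j \<in> S") (auto simp: mut_mat_apply simul_mut_mat_def)
  next
    case False
    show ?thesis
    proof (cases "i \<in> S \<or> j \<in> S")
      case True
      then have "simul_mut_mat S M i k = 0 \<or> simul_mut_mat S M k j = 0"
        using col unconnected by (auto simp: simul_mut_mat_def)
      then show ?thesis
        using True False by (auto simp: mut_mat_apply simul_mut_mat_def)
    next
      case outside: False
      have "simul_mut_mat S M i k = M i k" "simul_mut_mat S M k j = M k j"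
        using col row outside by auto
      then have "mut_mat k (simul_mut_mat S M) i j = simul_mut_mat S M i j + mut_term (M i k) (M k j)"
        using False by (simp add: mut_mat_apply)
      also have "\<dots> = simul_mut_mat (insert k S) M i j"
        using False outside assms(1,2) by (simp add: simul_mut_mat_def)
      finally show ?thesis .
    qed
  qed
qed

lemma mut_var_simul_mut:
  assumes "k \<notin> S" and unconnected: "\<forall>a\<in>insert k S. \<forall>b\<in>insert k S. M a b = 0"
  shows "mut_var (simul_mut_mat S M) (simul_mut_vars S M y) k = mut_var M y k"
proof -
  have "simul_mut_vars S M y l = y l" if "M l k \<noteq> 0" for l
    using that unconnected by (auto simp: simul_mut_vars_def)
  then show ?thesis
    unfolding mut_var_def simul_mut_mat_unconnected(1)[OF assms]
    using assms(1) by (auto simp: simul_mut_vars_def intro!: arg_cong2[where f = "(/)"] prod.cong)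
qed

lemma fold_mut_seed_unconnected:
  fixes M :: "'q::finite imat"
  assumes "distinct ks" "\<forall>a\<in>set ks. \<forall>b\<in>set ks. M a b = 0"
  shows "fold mut_seed ks (M, y) = (simul_mut_mat (set ks) M, simul_mut_vars (set ks) M y)"
  using assms
proof (induction ks rule: rev_induct)
  case Nil
  then show ?case by (simp add: fun_eq_iff simul_mut_mat_def simul_mut_vars_def)
next
  case (snoc k ks)
  then have "k \<notin> set ks" "\<forall>a\<in>insert k (set ks). \<forall>b\<in>insert k (set ks). M a b = 0"
    by auto
  moreover have "(simul_mut_vars (set ks) M y)(k := mut_var M y k) = simul_mut_vars (insert k (set ks)) M y"
    by (auto simp: simul_mut_vars_def fun_eq_iff)
  ultimately show ?case
    using snoc by (simp add: mut_seed_eq mut_mat_simul_mut_mat mut_var_simul_mut)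
qed

lemma simul_mut_mat_orbit_entry_eq_0:
  assumes "admissible A G" "sign_skew_symmetric A" "g \<in> G"
  shows "simul_mut_mat S A i (g i) = 0"
  using admissible_orbit_entry_eq_0[OF assms] admissible_orbit_mut_term_eq_0[OF assms]
  by (simp add: simul_mut_mat_def)

lemma is_aut_simul_mut_mat:
  assumes "is_aut M g" "g ` S = S"
  shows "is_aut (simul_mut_mat S M) g"
proof -
  have g: "bij g" and M: "\<And>i j. M (g i) (g j) = M i j"
    using assms(1) unfolding is_aut_def by blast+
  have S: "g i \<in> S \<longleftrightarrow> i \<in> S" for i
    using assms(2) inj_image_mem_iff[OF bij_is_inj[OF g]] by metis
  have "bij_betw g S S"
    using bij_betw_subset[OF g] assms(2) by blast
  then have "(\<Sum>k\<in>S. mut_term (M (g i) k) (M k (g j))) = (\<Sum>k\<in>S. mut_term (M i k) (M k j))" for i j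
    using sum.reindex_bij_betw[of g S S "\<lambda>k. mut_term (M (g i) k) (M k (g j))"] by (simp add: M)
  then show ?thesis
    using g by (simp add: is_aut_def simul_mut_mat_def S M)
qed

lemma act_mut_var:
  fixes M :: "'q::linorder imat" and y :: "'q \<Rightarrow> 'q ratfun"
  assumes "is_aut M g" and y: "\<forall>i. act g (y i) = y (g i)"
  shows "act g (mut_var M y k) = mut_var M y (g k)"
proof -
  have g: "bij g" and M: "\<And>i j. M (g i) (g j) = M i j"
    using assms(1) unfolding is_aut_def by blast+
  have reindex: "(\<Prod>l\<in>{l. P (M l k)}. f (g l) (M l k)) = (\<Prod>l\<in>{l. P (M l (g k))}. f l (M l (g k)))"
    for P :: "int \<Rightarrow> bool" and f :: "'q \<Rightarrow> int \<Rightarrow> 'q ratfun"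
  proof -
    have "g ` {l. P (M l k)} = {l. P (M l (g k))}"
    proof
      show "g ` {l. P (M l k)} \<subseteq> {l. P (M l (g k))}"
        by (auto simp: M)
      show "{l. P (M l (g k))} \<subseteq> g ` {l. P (M l k)}"
      proof
        fix l assume "l \<in> {l. P (M l (g k))}"
        moreover have "l = g (inv g l)"
          using g by (simp add: bij_is_surj surj_f_inv_f)
        ultimately show "l \<in> g ` {l. P (M l k)}"
          by (metis (mono_tags) M image_eqI mem_Collect_eq)
      qed
    qed
    then have "bij_betw g {l. P (M l k)} {l. P (M l (g k))}"
      using bij_betw_subset[OF g] by blast
    then show ?thesis
      using prod.reindex_bij_betw[of g _ _ "\<lambda>l. f l (M l (g k))"] by (simp add: M)
  qed
  show ?thesis
    unfolding mut_var_def act_divide[OF g] act_add[OF g] act_prod[OF g] act_power[OF g]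
    using reindex[where P = "\<lambda>a. a > 0" and f = "\<lambda>l a. y l ^ nat a"]
      reindex[where P = "\<lambda>a. a < 0" and f = "\<lambda>l a. y l ^ nat (- a)"]
    by (simp add: y)
qed

lemma simul_mut_vars_equivariant:
  fixes M :: "'q::linorder imat" and y :: "'q \<Rightarrow> 'q ratfun"
  assumes "is_aut M g" "g ` S = S" "\<forall>i. act g (y i) = y (g i)"
  shows "simul_mut_vars S M y (g i) = act g (simul_mut_vars S M y i)"
proof -
  have "g i \<in> S \<longleftrightarrow> i \<in> S"
    using assms(1,2) inj_image_mem_iff[OF bij_is_inj] unfolding is_aut_def by metis
  then show ?thesis
    using act_mut_var[OF assms(1,3)] assms(3) by (simp add: simul_mut_vars_def)
qed

theorem mainTheorem11:
  fixes B A :: "'q::{finite,linorder} imat"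
    and G :: "('q \<Rightarrow> 'q) set"
    and x :: "'q \<Rightarrow> 'q ratfun"
    and \<Omega> :: "'q set"
    and ks :: "'q list"
    and An :: "'q imat" and xn :: "'q \<Rightarrow> 'q ratfun"
  assumes "skew_symmetrizable B"
    and "admissible B G"
    and "(A, x) \<in> cluster_seeds B"
    and "G_invariant_seed G (A, x)"
    and "G_orbit G \<Omega>"
    and "distinct ks" and "set ks = \<Omega>"
    and "(An, xn) = fold mut_seed ks (A, x)"
  shows "aut_group An G \<and> (\<forall>i. \<forall>g\<in>G. An i (g i) = 0 \<and> xn (g i) = act g (xn i))"
proof -
  obtain d where "skew_symmetrizer d B"
    using assms(1) by (auto simp: skew_symmetrizable_iff)
  then have sign: "sign_skew_symmetric A"
    using skew_symmetrizer_cluster_seed[OF assms(3)] skew_symmetrizer_sign_skew_symmetric by fastforce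
  have adm: "admissible A G" and x: "\<forall>g\<in>G. \<forall>i. act g (x i) = x (g i)"
    using assms(4) unfolding G_invariant_seed_def by auto
  have aut: "aut_group A G"
    using adm unfolding admissible_def by blast
  have orbit: "g ` \<Omega> = \<Omega>" if "g \<in> G" for g
    using G_orbit_image[OF aut assms(5) that] .
  have "\<forall>a\<in>set ks. \<forall>b\<in>set ks. A a b = 0"
    using admissible_orbit_entries_eq_0[OF adm sign assms(5)] assms(7) by blast
  with assms(8) have "(An, xn) = (simul_mut_mat (set ks) A, simul_mut_vars (set ks) A x)"
    by (simp add: fold_mut_seed_unconnected[OF assms(6)])
  then have An: "An = simul_mut_mat \<Omega> A" and xn: "xn = simul_mut_vars \<Omega> A x"
    using assms(7) by simp_all
  have "aut_group An G"
    using aut is_aut_simul_mut_mat orbit unfolding An aut_group_def by blast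
  moreover have "An i (g i) = 0" if "g \<in> G" for i g
    unfolding An using simul_mut_mat_orbit_entry_eq_0[OF adm sign that] .
  moreover have "xn (g i) = act g (xn i)" if "g \<in> G" for i g
    unfolding xn using simul_mut_vars_equivariant[OF _ orbit[OF that]] aut x that
    unfolding aut_group_def by blast
  ultimately show ?thesis by blast
qed

end
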